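(* Let $D\subseteq\mathbb{R}^{p+2}$ be a domain invariant under $(\mathbf{x}_p,r)\mapsto(\mathbf{x}_p,-r)$ and let $f(\mathbf{x})=F_1(\mathbf{x}')+\underline{\omega}F_2(\mathbf{x}')$ be a generalized partial-slice function on $\Omega_D$ induced by a $C^1$ stem function, with $f\in C^1(\Omega_D,\mathbb{A})$. Then $f$ is monogenic on $\Omega_D$ (i.e. $D_{\mathbf{x}}f=0$) if and only if $$D_{\mathbf{x}_p}F_1(\mathbf{x}')-\partial_rF_2(\mathbf{x}')=\frac{q-1}{r}F_2(\mathbf{x}'),\qquad \overline{D}_{\mathbf{x}_p}F_2(\mathbf{x}')+\partial_rF_1(\mathbf{x}')=0,\qquad \mathbf{x}'=(\mathbf{x}_p,r)\in D,\ r\neq0.$$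
   Context: Let $\mathbb{A}$ be a real alternative algebra (the associator $[a,b,c]=(ab)c-a(bc)$ is an alternating trilinear function) with unity $1$, of finite real dimension $d>1$, equipped with an anti-involution $a\mapsto a^c$ (real linear, $a^c=a$ for real $a$, $(a^c)^c=a$, $(ab)^c=b^ca^c$). Let $t(x)=x+x^c$, $n(x)=xx^c$, $\mathbb{S}_{\mathbb{A}}=\{x: t(x)=0,\ n(x)=1\}$ (assumed nonempty) and $Q_{\mathbb{A}}=\mathbb{R}\cup\{x: t(x)\in\mathbb{R},\ n(x)\in\mathbb{R},\ 4n(x)>t(x)^2\}$. Let $M$ be a real subspace with $\mathbb{R}\subsetneq M\subseteq Q_{\mathbb{A}}$ having a basis $(v_0,\dots,v_m)$, $m\ge1$, $v_0=1$, $v_s\in\mathbb{S}_{\mathbb{A}}$, $v_sv_t=-v_tv_s$ for distinct $s,t\ge1$; complete it to a basis of $\mathbb{A}$ with associated Euclidean norm. Identify $x=\sum x_sv_s\in M$ with $(x_0,\dots,x_m)\in\mathbb{R}^{m+1}$; differentiate componentwise. Fix $p\in\{0,\dots,m-1\}$, $q=m-p$; $\mathbf{x}=\mathbf{x}_p+\underline{\mathbf{x}}_q$ with $\mathbf{x}_p=\sum_{s=0}^px_sv_s\in\mathbb{R}^{p+1}$, $\underline{\mathbf{x}}_q=\sum_{s=p+1}^m x_sv_s$; $\mathbb{S}=\{\sum_{s=p+1}^m x_sv_s:\sum x_s^2=1\}$; $\underline{\mathbf{x}}_q=r\underline{\omega}$, $r=|\underline{\mathbf{x}}_q|$; $\mathbf{x}'=(\mathbf{x}_p,r)$.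 $D_{\mathbf{x}_p}f=\sum_{s=0}^p v_s\partial_{x_s}f$, $\overline{D}_{\mathbf{x}_p}f=\partial_{x_0}f-\sum_{s=1}^pv_s\partial_{x_s}f$, $D_{\mathbf{x}}f=\sum_{s=0}^mv_s\partial_{x_s}f$. $\Omega_D=\{\mathbf{x}_p+r\underline{\omega}:(\mathbf{x}_p,r)\in D,\ r\ge0,\ \underline{\omega}\in\mathbb{S}\}$. A stem function $(F_1,F_2):D\to\mathbb{A}^2$ has $F_1$ even and $F_2$ odd in $r$ and induces the generalized partial-slice function $f(\mathbf{x}_p+r\underline{\omega})=F_1(\mathbf{x}')+\underline{\omega}F_2(\mathbf{x}')$. *)

theory Defs
  imports "HOL-Analysis.Analysis"
begin

text \<open>The algebra A is modelled as a finite-dimensional Euclidean space 'a with an explicit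
 bilinear multiplication mul, unit e and anti-involution cj.  Real numbers are the
 multiples c *R e of the unit.\<close>

definition assoc3 :: "('a::real_vector \<Rightarrow> 'a \<Rightarrow> 'a) \<Rightarrow> 'a \<Rightarrow> 'a \<Rightarrow> 'a \<Rightarrow> 'a" where
  "assoc3 mul a b c = mul (mul a b) c - mul a (mul b c)"

definition is_real_elt :: "'a::real_vector \<Rightarrow> 'a \<Rightarrow> bool" where
  "is_real_elt e x \<longleftrightarrow> (\<exists>c::real. x = c *\<^sub>R e)"

definition alt_algebra_inv ::
  "('a::real_vector \<Rightarrow> 'a \<Rightarrow> 'a) \<Rightarrow> 'a \<Rightarrow> ('a \<Rightarrow> 'a) \<Rightarrow> bool" where
  "alt_algebra_inv mul e cj \<longleftrightarrow>
     bilinear mul \<and>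
     (\<forall>a b. assoc3 mul a a b = 0) \<and>
     (\<forall>a b. assoc3 mul a b a = 0) \<and>
     (\<forall>a b. assoc3 mul b a a = 0) \<and>
     (\<forall>x. mul e x = x \<and> mul x e = x) \<and>
     linear cj \<and>
     (\<forall>c::real. cj (c *\<^sub>R e) = c *\<^sub>R e) \<and>
     (\<forall>a. cj (cj a) = a) \<and>
     (\<forall>a b. cj (mul a b) = mul (cj b) (cj a))"

definition trc :: "('a::real_vector \<Rightarrow> 'a) \<Rightarrow> 'a \<Rightarrow> 'a" where
  "trc cj x = x + cj x"

definition nrm :: "('a::real_vector \<Rightarrow> 'a \<Rightarrow> 'a) \<Rightarrow> ('a \<Rightarrow> 'a) \<Rightarrow> 'a \<Rightarrow> 'a" where
  "nrm mul cj x = mul x (cj x)"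

definition sphA :: "('a::real_vector \<Rightarrow> 'a \<Rightarrow> 'a) \<Rightarrow> 'a \<Rightarrow> ('a \<Rightarrow> 'a) \<Rightarrow> 'a set" where
  "sphA mul e cj = {x. trc cj x = 0 \<and> nrm mul cj x = e}"

definition QA :: "('a::real_vector \<Rightarrow> 'a \<Rightarrow> 'a) \<Rightarrow> 'a \<Rightarrow> ('a \<Rightarrow> 'a) \<Rightarrow> 'a set" where
  "QA mul e cj = {x. is_real_elt e x} \<union>
     {x. \<exists>t n::real. trc cj x = t *\<^sub>R e \<and> nrm mul cj x = n *\<^sub>R e \<and> 4 * n > t\<^sup>2}"

definition pderiv_dir :: "('b::real_normed_vector \<Rightarrow> 'a::real_normed_vector) \<Rightarrow> 'b \<Rightarrow> 'b \<Rightarrow> 'a" where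
  "pderiv_dir f x v = vector_derivative (\<lambda>t::real. f (x + t *\<^sub>R v)) (at 0)"

definition C1_on :: "'b::euclidean_space set \<Rightarrow> ('b \<Rightarrow> 'a::real_normed_vector) \<Rightarrow> bool" where
  "C1_on S F \<longleftrightarrow> (\<exists>F'. (\<forall>x\<in>S. (F has_derivative F' x) (at x)) \<and>
                        (\<forall>v. continuous_on S (\<lambda>x. F' x v)))"

definition vecA :: "('i::finite \<Rightarrow> 'a::real_vector) \<Rightarrow> real^'i \<Rightarrow> 'a" where
  "vecA v x = (\<Sum>i\<in>UNIV. (x $ i) *\<^sub>R v i)"

text \<open>Omega_D, in coordinates (x_p, x_q) of M.\<close>
definition OmegaD :: "((real^'p) \<times> real) set \<Rightarrow> ((real^'p) \<times> (real^'q)) set" where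
  "OmegaD D = {(xp, r *\<^sub>R \<omega>) | xp r \<omega>. (xp, r) \<in> D \<and> r \<ge> 0 \<and> norm \<omega> = 1}"

definition Dx :: "('a::real_normed_vector \<Rightarrow> 'a \<Rightarrow> 'a) \<Rightarrow> ('p::finite \<Rightarrow> 'a) \<Rightarrow> ('q::finite \<Rightarrow> 'a)
   \<Rightarrow> ((real^'p) \<times> (real^'q) \<Rightarrow> 'a) \<Rightarrow> (real^'p) \<times> (real^'q) \<Rightarrow> 'a" where
  "Dx mul vp w f x =
     (\<Sum>i\<in>UNIV. mul (vp i) (pderiv_dir f x (axis i 1, 0))) +
     (\<Sum>j\<in>UNIV. mul (w j) (pderiv_dir f x (0, axis j 1)))"

text \<open>D_{x_p} and its conjugate on functions of x' = (x_p, r); i0 is the index of v_0 = 1.\<close>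
definition Dxp :: "('a::real_normed_vector \<Rightarrow> 'a \<Rightarrow> 'a) \<Rightarrow> ('p::finite \<Rightarrow> 'a)
   \<Rightarrow> ((real^'p) \<times> real \<Rightarrow> 'a) \<Rightarrow> (real^'p) \<times> real \<Rightarrow> 'a" where
  "Dxp mul vp F y = (\<Sum>i\<in>UNIV. mul (vp i) (pderiv_dir F y (axis i 1, 0)))"

definition Dxp_bar :: "('a::real_normed_vector \<Rightarrow> 'a \<Rightarrow> 'a) \<Rightarrow> ('p::finite \<Rightarrow> 'a) \<Rightarrow> 'p
   \<Rightarrow> ((real^'p) \<times> real \<Rightarrow> 'a) \<Rightarrow> (real^'p) \<times> real \<Rightarrow> 'a" where
  "Dxp_bar mul vp i0 F y = pderiv_dir F y (axis i0 1, 0) -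
     (\<Sum>i\<in>UNIV - {i0}. mul (vp i) (pderiv_dir F y (axis i 1, 0)))"

definition dr :: "((real^'p::finite) \<times> real \<Rightarrow> 'a::real_normed_vector) \<Rightarrow> (real^'p) \<times> real \<Rightarrow> 'a" where
  "dr F y = pderiv_dir F y (0, 1)"

end

theory Submission
  imports Defs
begin

(* Off the axis r = 0 the slice function is f (x_p, y) = F1 (x_p, rho) + (y / rho) F2 (x_p, rho)
   for either sign of rho = +-|y| (F1 is even, F2 is odd), so the chain rule expresses D_x f
   through the stem function.  With omega = y / rho, left alternativity and the anticommutation of
   omega with v_1, ..., v_p turn the x_p-part of D_x f into D_xp F1 + omega (conjugate D_xp) F2,
   while omega^2 = w_j^2 = -1 turn the x_q-part into omega d_r F1 - d_r F2 - (q - 1)/rho F2.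
   Thus D_x f = A + omega B, where A = 0 and B = 0 are the two equations of the theorem.
   Evaluating at the points (x_p, +-r a) shows that D_x f vanishes off the axis iff A = B = 0,
   and on the axis D_x f vanishes by continuity, since f is C^1. *)

lemma linear_vecA: "linear (vecA w)"
  by (rule linearI) (simp_all add: vecA_def scaleR_add_left sum.distrib scaleR_sum_right)

lemma vecA_axis: "vecA w (axis j 1) = w j"
proof -
  have "vecA w (axis j 1) = (\<Sum>i\<in>UNIV. if i = j then w i else 0)"
    unfolding vecA_def by (rule sum.cong) (auto simp: axis_def)
  then show ?thesis
    by simp
qed

lemma sum_offdiagonal_antisymmetric:
  fixes T :: "'i \<Rightarrow> 'i \<Rightarrow> 'a::real_vector"
  assumes "finite I" and antisym: "\<And>j k. j \<noteq> k \<Longrightarrow> T k j = - T j k"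
  shows "(\<Sum>j\<in>I. \<Sum>k\<in>I. T j k) = (\<Sum>j\<in>I. T j j)"
proof -
  have sym: "T j k + T k j = (if j = k then 2 *\<^sub>R T j j else 0)" for j k
    using antisym[of j k] by (auto simp: scaleR_2)
  have swap: "(\<Sum>j\<in>I. \<Sum>k\<in>I. T k j) = (\<Sum>j\<in>I. \<Sum>k\<in>I. T j k)"
    by (rule sum.swap)
  have "2 *\<^sub>R (\<Sum>j\<in>I. \<Sum>k\<in>I. T j k) = (\<Sum>j\<in>I. \<Sum>k\<in>I. T j k + T k j)"
    by (simp only: scaleR_2 sum.distrib swap)
  also have "\<dots> = 2 *\<^sub>R (\<Sum>j\<in>I. T j j)"
    using \<open>finite I\<close> by (simp add: sym scaleR_sum_right)
  finally show ?thesis by simp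
qed

lemma anticommute_vecA:
  assumes "bounded_bilinear mul" and "\<And>j. mul x (w j) = - mul (w j) x"
  shows "mul x (vecA w u) = - mul (vecA w u) x"
proof -
  interpret bounded_bilinear mul by (rule assms(1))
  have "mul x (vecA w u) = (\<Sum>j\<in>UNIV. u $ j *\<^sub>R mul x (w j))"
    by (simp add: vecA_def sum_right scaleR_right)
  also have "\<dots> = - mul (vecA w u) x"
    by (simp add: assms(2) vecA_def sum_left scaleR_left sum_negf)
  finally show ?thesis .
qed

lemma sphA_square:
  assumes "bilinear mul" and "x \<in> sphA mul e cj"
  shows "mul x x = - e"
proof -
  have "cj x = - x" and "mul x (cj x) = e"
    using assms(2) by (auto simp: sphA_def trc_def nrm_def add_eq_0_iff)
  moreover have "mul x x = - mul x (- x)"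
    using bilinear_rneg[OF assms(1)] by simp
  ultimately show ?thesis
    by simp
qed

locale anticommuting_units = bounded_bilinear mul
  for mul :: "'a::real_normed_vector \<Rightarrow> 'a \<Rightarrow> 'a" +
  fixes e :: 'a and w :: "'q::finite \<Rightarrow> 'a"
  assumes left_alternative: "mul (mul a a) b = mul a (mul a b)"
    and unit_left: "mul e b = b"
    and units_square: "mul (w j) (w j) = - e"
    and units_anticommute: "j \<noteq> l \<Longrightarrow> mul (w j) (w l) = - mul (w l) (w j)"
begin

lemma left_alternative_polarized:
  "mul x (mul y b) + mul y (mul x b) = mul (mul x y + mul y x) b"
proof -
  have "mul (mul (x + y) (x + y)) b = mul (x + y) (mul (x + y) b)"
    by (rule left_alternative)
  then show ?thesis
    by (simp add: add_left add_right left_alternative add.commute)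
qed

lemma anticommute_left_mul:
  assumes "mul x y = - mul y x"
  shows "mul x (mul y b) = - mul y (mul x b)"
  using left_alternative_polarized[of x y b] assms
  by (simp add: zero_left eq_neg_iff_add_eq_0)

lemma square_vecA: "mul (vecA w u) (vecA w u) = - ((norm u)\<^sup>2 *\<^sub>R e)"
proof -
  have "mul (vecA w u) (vecA w u) = (\<Sum>k\<in>UNIV. \<Sum>j\<in>UNIV. (u $ k * u $ j) *\<^sub>R mul (w j) (w k))"
    by (simp add: vecA_def sum_left sum_right scaleR_left scaleR_right scaleR_sum_right)
  also have "\<dots> = (\<Sum>j\<in>UNIV. (u $ j * u $ j) *\<^sub>R mul (w j) (w j))"
  proof (rule sum_offdiagonal_antisymmetric)
    fix j k :: 'q
    assume "j \<noteq> k"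
    then show "(u $ k * u $ j) *\<^sub>R mul (w j) (w k) = - ((u $ j * u $ k) *\<^sub>R mul (w k) (w j))"
      using units_anticommute[of k j] by (simp add: mult.commute)
  qed simp
  also have "\<dots> = - ((norm u)\<^sup>2 *\<^sub>R e)"
    by (simp add: units_square power2_norm_eq_inner inner_vec_def sum_negf scaleR_sum_left)
  finally show ?thesis .
qed

lemma vecA_left_mul: "mul (vecA w u) b = (\<Sum>j\<in>UNIV. u $ j *\<^sub>R mul (w j) b)"
  by (simp add: vecA_def sum_left scaleR_left)

lemma vecA_left_mul_twice:
  assumes "norm u = 1"
  shows "mul (vecA w u) (mul (vecA w u) b) = - b"
  using assms square_vecA[of u] left_alternative[of "vecA w u" b]
  by (simp add: minus_left unit_left)

lemma units_left_mul_twice: "mul (w j) (mul (w j) b) = - b"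
  using vecA_left_mul_twice[of "axis j 1" b] by (simp add: vecA_axis)

lemma zero_if_add_and_diff_vecA:
  assumes "norm u = 1" and "a + mul (vecA w u) b = 0" and "a - mul (vecA w u) b = 0"
  shows "a = 0" and "b = 0"
proof -
  have "2 *\<^sub>R mul (vecA w u) b = (a + mul (vecA w u) b) - (a - mul (vecA w u) b)"
    by (simp add: scaleR_2)
  then have "mul (vecA w u) b = 0"
    using assms(2,3) by simp
  then show "a = 0" and "b = 0"
    using assms vecA_left_mul_twice[of u b] by (simp_all add: zero_right)
qed

lemma sum_left_mul_anticommuting:
  fixes vp :: "'p::finite \<Rightarrow> 'a"
  assumes "vp i0 = e" and "\<And>i. i \<noteq> i0 \<Longrightarrow> mul (vp i) W = - mul W (vp i)"
  shows "(\<Sum>i\<in>UNIV. mul (vp i) (a i + mul W (b i))) =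
    (\<Sum>i\<in>UNIV. mul (vp i) (a i)) + mul W (b i0 - (\<Sum>i\<in>UNIV - {i0}. mul (vp i) (b i)))"
proof -
  have "(\<Sum>i\<in>UNIV - {i0}. mul (vp i) (mul W (b i))) = (\<Sum>i\<in>UNIV - {i0}. - mul W (mul (vp i) (b i)))"
    by (rule sum.cong) (simp_all add: anticommute_left_mul[OF assms(2)])
  then have "(\<Sum>i\<in>UNIV. mul (vp i) (mul W (b i))) = mul W (b i0) - mul W (\<Sum>i\<in>UNIV - {i0}. mul (vp i) (b i))"
    by (simp add: sum.remove[of UNIV i0] assms(1) unit_left sum_right sum_negf)
  then show ?thesis
    by (simp add: add_right diff_right sum.distrib)
qed

lemma sum_units_mul_radial:
  assumes "norm u = 1"
  shows "(\<Sum>j\<in>UNIV. mul (w j) (u $ j *\<^sub>R c + s *\<^sub>R (mul (w j) F - u $ j *\<^sub>R mul (vecA w u) F))) =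
    mul (vecA w u) c + (s * (1 - real CARD('q))) *\<^sub>R F"
proof -
  let ?X = "mul (vecA w u) F"
  have "mul (w j) (u $ j *\<^sub>R c + s *\<^sub>R (mul (w j) F - u $ j *\<^sub>R ?X)) =
      u $ j *\<^sub>R mul (w j) c - s *\<^sub>R F - s *\<^sub>R (u $ j *\<^sub>R mul (w j) ?X)" for j
    by (simp add: add_right diff_right scaleR_right units_left_mul_twice scaleR_diff_right)
  then have "(\<Sum>j\<in>UNIV. mul (w j) (u $ j *\<^sub>R c + s *\<^sub>R (mul (w j) F - u $ j *\<^sub>R ?X))) =
      (\<Sum>j\<in>UNIV. u $ j *\<^sub>R mul (w j) c) - (real CARD('q) * s) *\<^sub>R F
      - s *\<^sub>R (\<Sum>j\<in>UNIV. u $ j *\<^sub>R mul (w j) ?X)"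
    by (simp add: sum_subtractf scaleR_sum_right sum_constant_scaleR)
  also have "\<dots> = mul (vecA w u) c - (real CARD('q) * s) *\<^sub>R F - s *\<^sub>R mul (vecA w u) ?X"
    by (simp only: vecA_left_mul)
  also have "\<dots> = mul (vecA w u) c + (s * (1 - real CARD('q))) *\<^sub>R F"
    using vecA_left_mul_twice[OF assms] by (simp add: algebra_simps)
  finally show ?thesis .
qed

end

lemma pderiv_dir_eq:
  assumes "(f has_derivative f') (at x)"
  shows "pderiv_dir f x v = f' v"
proof -
  have "((\<lambda>t::real. x + t *\<^sub>R v) has_derivative (\<lambda>t. t *\<^sub>R v)) (at 0)"
    by (auto intro!: derivative_eq_intros)
  moreover have "(f has_derivative f') (at (x + 0 *\<^sub>R v))"
    using assms by simp
  ultimately have "((\<lambda>t. f (x + t *\<^sub>R v)) has_derivative (\<lambda>t. f' (t *\<^sub>R v))) (at 0)"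
    by (rule has_derivative_compose)
  then have "((\<lambda>t. f (x + t *\<^sub>R v)) has_vector_derivative f' v) (at 0)"
    by (simp add: has_vector_derivative_def linear_scale[OF has_derivative_linear[OF assms]])
  then show ?thesis
    unfolding pderiv_dir_def by (rule vector_derivative_at)
qed

lemma has_derivative_radial_slice:
  fixes F1 F2 :: "'b::real_normed_vector \<times> real \<Rightarrow> 'a::real_normed_vector"
    and W :: "'c::euclidean_space \<Rightarrow> 'a"
  assumes mul: "bounded_bilinear mul" and W: "linear W" and \<sigma>: "\<bar>\<sigma>\<bar> = 1" and "y \<noteq> 0"
    and F1: "(F1 has_derivative F1') (at (x, \<sigma> * norm y))"
    and F2: "(F2 has_derivative F2') (at (x, \<sigma> * norm y))"
  defines "\<rho> \<equiv> \<sigma> * norm y" and "u \<equiv> inverse (\<sigma> * norm y) *\<^sub>R y"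
  shows "((\<lambda>z. F1 (fst z, \<sigma> * norm (snd z))
      + mul (W (inverse (\<sigma> * norm (snd z)) *\<^sub>R snd z)) (F2 (fst z, \<sigma> * norm (snd z))))
    has_derivative (\<lambda>h. F1' (fst h, snd h \<bullet> u) + mul (W u) (F2' (fst h, snd h \<bullet> u))
      + inverse \<rho> *\<^sub>R (mul (W (snd h)) (F2 (x, \<rho>)) - (snd h \<bullet> u) *\<^sub>R mul (W u) (F2 (x, \<rho>)))))
    (at (x, y))"
proof -
  interpret mul: bounded_bilinear mul by (rule mul)
  have \<rho>: "\<rho> \<noteq> 0"
    using \<sigma> \<open>y \<noteq> 0\<close> by (simp add: \<rho>_def)
  have "\<sigma> = 1 \<or> \<sigma> = -1"
    using \<sigma> by linarith
  then have u: "\<sigma> *\<^sub>R sgn y = u"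
    by (auto simp: u_def sgn_div_norm)
  have "((\<lambda>z. norm (snd z)) has_derivative (\<lambda>h. snd h \<bullet> sgn y)) (at (x, y))"
    using has_derivative_compose[of snd snd "(x, y)" UNIV norm] has_derivative_norm[OF \<open>y \<noteq> 0\<close>]
    by (simp add: has_derivative_snd)
  from has_derivative_mult_right[OF this, of \<sigma>]
  have radius: "((\<lambda>z. \<sigma> * norm (snd z)) has_derivative (\<lambda>h. snd h \<bullet> u)) (at (x, y))"
    by (simp flip: u)
  have arg: "((\<lambda>z. (fst z, \<sigma> * norm (snd z))) has_derivative (\<lambda>h. (fst h, snd h \<bullet> u))) (at (x, y))"
    by (intro derivative_intros radius)
  have "((\<lambda>z. inverse (\<sigma> * norm (snd z))) has_derivative
      (\<lambda>h. - (inverse \<rho> * (snd h \<bullet> u) * inverse \<rho>))) (at (x, y))"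
    using Deriv.has_derivative_inverse[OF _ radius] \<rho> by (simp add: \<rho>_def)
  from has_derivative_scaleR[OF this has_derivative_snd[OF has_derivative_ident]]
  have "((\<lambda>z. inverse (\<sigma> * norm (snd z)) *\<^sub>R snd z) has_derivative
      (\<lambda>h. inverse \<rho> *\<^sub>R snd h - (inverse \<rho> * (snd h \<bullet> u) * inverse \<rho>) *\<^sub>R y)) (at (x, y))"
    by (simp add: \<rho>_def)
  then have "((\<lambda>z. inverse (\<sigma> * norm (snd z)) *\<^sub>R snd z) has_derivative
      (\<lambda>h. inverse \<rho> *\<^sub>R (snd h - (snd h \<bullet> u) *\<^sub>R u))) (at (x, y))"
    by (simp add: scaleR_diff_right u_def[folded \<rho>_def, symmetric] flip: scaleR_scaleR)
  from has_derivative_compose[OF this linear_imp_has_derivative[OF W]]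
  have dir: "((\<lambda>z. W (inverse (\<sigma> * norm (snd z)) *\<^sub>R snd z)) has_derivative
      (\<lambda>h. inverse \<rho> *\<^sub>R (W (snd h) - (snd h \<bullet> u) *\<^sub>R W u))) (at (x, y))"
    by (simp add: linear_diff[OF W] linear_scale[OF W])
  have "(\<lambda>z. (fst z, \<sigma> * norm (snd z))) (x, y) = (x, \<rho>)"
    by (simp add: \<rho>_def)
  with F1 F2 have F1': "(F1 has_derivative F1') (at ((\<lambda>z. (fst z, \<sigma> * norm (snd z))) (x, y)))"
    and F2': "(F2 has_derivative F2') (at ((\<lambda>z. (fst z, \<sigma> * norm (snd z))) (x, y)))"
    by (simp_all add: \<rho>_def)
  show ?thesis
    using has_derivative_add[OF has_derivative_compose[OF arg F1']
        mul.FDERIV[OF dir has_derivative_compose[OF arg F2']]]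
    by (simp add: \<rho>_def[symmetric] u_def[folded \<rho>_def, symmetric] mul.scaleR_left mul.diff_left
        algebra_simps)
qed

lemma OmegaD_eq: "OmegaD D = {z :: (real^'p::finite) \<times> (real^'q::finite). (fst z, norm (snd z)) \<in> D}"
proof (intro set_eqI iffI)
  fix z :: "(real^'p) \<times> (real^'q)"
  assume "z \<in> {z. (fst z, norm (snd z)) \<in> D}"
  moreover define \<omega> :: "real^'q" where "\<omega> = (if snd z = 0 then axis undefined 1 else sgn (snd z))"
  ultimately have "z = (fst z, norm (snd z) *\<^sub>R \<omega>)" and "(fst z, norm (snd z)) \<in> D" and "norm \<omega> = 1"
    by (simp_all add: \<omega>_def norm_sgn sgn_div_norm prod_eq_iff)
  then show "z \<in> OmegaD D"
    unfolding OmegaD_def using norm_ge_zero by blast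
qed (auto simp: OmegaD_def)

lemma open_OmegaD:
  assumes "open D"
  shows "open (OmegaD D)"
proof -
  have "continuous_on UNIV (\<lambda>z::(real^'p) \<times> (real^'q). (fst z, norm (snd z)))"
    by (intro continuous_intros)
  from open_vimage[OF assms this] show ?thesis
    by (simp add: OmegaD_eq vimage_def)
qed

lemma continuous_on_Dx:
  assumes "bounded_bilinear mul" and "open S" and "C1_on S f"
  shows "continuous_on S (Dx mul vp w f)"
proof -
  interpret mul: bounded_bilinear mul by (rule assms(1))
  obtain f' where f': "\<And>x. x \<in> S \<Longrightarrow> (f has_derivative f' x) (at x)"
    and cont: "\<And>v. continuous_on S (\<lambda>x. f' x v)"
    using assms(3) unfolding C1_on_def by blast
  have "continuous_on S (\<lambda>x. (\<Sum>i\<in>UNIV. mul (vp i) (f' x (axis i 1, 0)))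
      + (\<Sum>j\<in>UNIV. mul (w j) (f' x (0, axis j 1))))"
    by (intro continuous_on_add continuous_on_sum mul.continuous_on continuous_on_const cont)
  then show ?thesis
    by (rule continuous_on_eq) (simp add: Dx_def pderiv_dir_eq[OF f'])
qed

lemma eq_0_on_axis_by_continuity:
  fixes H :: "'b::metric_space \<times> 'c::euclidean_space \<Rightarrow> 'a::{t2_space,zero}"
  assumes "open S" and "continuous_on S H" and off_axis: "\<And>z. z \<in> S \<Longrightarrow> snd z \<noteq> 0 \<Longrightarrow> H z = 0"
    and "z \<in> S"
  shows "H z = 0"
proof (cases "snd z = 0")
  case True
  obtain a :: 'c where "a \<noteq> 0"
    using nonzero_Basis by blast
  define path where "path t = (fst z, t *\<^sub>R a)" for t :: real
  have "(path \<longlongrightarrow> z) (at_right 0)"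
    using True unfolding path_def by (cases z) (auto intro!: tendsto_eq_intros)
  moreover have "isCont H z"
    using assms(1,2,4) continuous_on_eq_continuous_at by blast
  ultimately have "((\<lambda>t. H (path t)) \<longlongrightarrow> H z) (at_right 0)"
    by (rule isCont_tendsto_compose[rotated])
  moreover have "((\<lambda>t. H (path t)) \<longlongrightarrow> 0) (at_right 0)"
  proof (rule tendsto_eventually)
    have "\<forall>\<^sub>F t in at_right 0. path t \<in> S"
      using \<open>(path \<longlongrightarrow> z) (at_right 0)\<close> assms(1,4) by (rule topological_tendstoD)
    moreover have "\<forall>\<^sub>F t in at_right 0. t > (0::real)"
      by (simp add: eventually_at_right_less)
    ultimately show "\<forall>\<^sub>F t in at_right 0. H (path t) = 0"
      by eventually_elim (use \<open>a \<noteq> 0\<close> off_axis in \<open>simp add: path_def\<close>)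
  qed
  ultimately show ?thesis
    by (rule tendsto_unique[OF trivial_limit_at_right_real])
qed (use off_axis assms(4) in simp)

(* vp i0 is the unit v_0, the other vp i are v_1, ..., v_p and w lists v_(p+1), ..., v_m. *)
locale partial_slice = anticommuting_units mul e w
  for mul :: "'a::real_normed_vector \<Rightarrow> 'a \<Rightarrow> 'a" and e :: 'a and w :: "'q::finite \<Rightarrow> 'a" +
  fixes vp :: "'p::finite \<Rightarrow> 'a" and i0 :: 'p
    and D :: "((real^'p) \<times> real) set" and F1 F2 :: "(real^'p) \<times> real \<Rightarrow> 'a"
    and f :: "(real^'p) \<times> (real^'q) \<Rightarrow> 'a"
  assumes vp_i0: "vp i0 = e"
    and vp_w_anticommute: "i \<noteq> i0 \<Longrightarrow> mul (vp i) (w j) = - mul (w j) (vp i)"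
    and open_D: "open D"
    and D_reflect: "(xp, r) \<in> D \<Longrightarrow> (xp, - r) \<in> D"
    and F1_even: "(xp, r) \<in> D \<Longrightarrow> F1 (xp, - r) = F1 (xp, r)"
    and F2_odd: "(xp, r) \<in> D \<Longrightarrow> F2 (xp, - r) = - F2 (xp, r)"
    and F1_differentiable: "y \<in> D \<Longrightarrow> F1 differentiable (at y)"
    and F2_differentiable: "y \<in> D \<Longrightarrow> F2 differentiable (at y)"
    and f_slice: "(xp, r) \<in> D \<Longrightarrow> r \<ge> 0 \<Longrightarrow> norm \<omega> = 1 \<Longrightarrow>
      f (xp, r *\<^sub>R \<omega>) = F1 (xp, r) + mul (vecA w \<omega>) (F2 (xp, r))"
begin

lemma abs_radius_in_D: "(x, r) \<in> D \<Longrightarrow> (x, \<bar>r\<bar>) \<in> D"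
  using D_reflect[of x r] by (cases "r \<ge> 0") simp_all

lemma vp_anticommute_vecA: "i \<noteq> i0 \<Longrightarrow> mul (vp i) (vecA w u) = - mul (vecA w u) (vp i)"
  by (rule anticommute_vecA[OF bounded_bilinear_axioms vp_w_anticommute])

(* sigma = -1 serves negative radii; this is where F1 even and F2 odd are used. *)
lemma f_off_axis:
  assumes "(x, norm y) \<in> D" and "y \<noteq> 0" and "\<bar>\<sigma>\<bar> = 1"
  shows "f (x, y) = F1 (x, \<sigma> * norm y)
    + mul (vecA w (inverse (\<sigma> * norm y) *\<^sub>R y)) (F2 (x, \<sigma> * norm y))"
proof -
  have "f (x, y) = F1 (x, norm y) + mul (vecA w (sgn y)) (F2 (x, norm y))"
    using f_slice[OF assms(1), of "sgn y"] assms(2) by (simp add: norm_sgn sgn_div_norm)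
  moreover have "\<sigma> = 1 \<or> \<sigma> = -1"
    using assms(3) by linarith
  ultimately show ?thesis
    using F1_even[OF assms(1)] F2_odd[OF assms(1)]
    by (auto simp: sgn_div_norm linear_cmul[OF linear_vecA] minus_left minus_right)
qed

lemma has_derivative_f_off_axis:
  assumes "y \<noteq> 0" and "\<rho> \<noteq> 0" and "\<bar>\<rho>\<bar> = norm y" and "(x, \<rho>) \<in> D"
    and F1': "(F1 has_derivative F1') (at (x, \<rho>))" and F2': "(F2 has_derivative F2') (at (x, \<rho>))"
  defines "u \<equiv> inverse \<rho> *\<^sub>R y"
  shows "(f has_derivative (\<lambda>h. F1' (fst h, snd h \<bullet> u) + mul (vecA w u) (F2' (fst h, snd h \<bullet> u))
    + inverse \<rho> *\<^sub>R (mul (vecA w (snd h)) (F2 (x, \<rho>)) - (snd h \<bullet> u) *\<^sub>R mul (vecA w u) (F2 (x, \<rho>)))))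
    (at (x, y))"
proof -
  define \<sigma> where "\<sigma> = \<rho> / norm y"
  have \<sigma>: "\<bar>\<sigma>\<bar> = 1" and \<rho>: "\<rho> = \<sigma> * norm y"
    using assms(1,3) by (simp_all add: \<sigma>_def)
  note has_derivative_radial_slice[OF bounded_bilinear_axioms linear_vecA[of w] \<sigma> assms(1)
      F1'[unfolded \<rho>] F2'[unfolded \<rho>]]
  moreover have "open (OmegaD D \<inter> {z. snd z \<noteq> 0})"
    by (intro open_Int open_OmegaD open_D open_Collect_neq continuous_intros)
  moreover have "(x, y) \<in> OmegaD D \<inter> {z. snd z \<noteq> 0}"
    using abs_radius_in_D[OF assms(4)] assms(1,3) by (simp add: OmegaD_eq)
  ultimately show ?thesis
    unfolding u_def \<rho>
    by (rule has_derivative_transform_within_open) (auto simp: OmegaD_eq f_off_axis[OF _ _ \<sigma>])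
qed

lemma Dx_off_axis:
  assumes "y \<noteq> 0" and "\<rho> \<noteq> 0" and "\<bar>\<rho>\<bar> = norm y" and "(x, \<rho>) \<in> D"
  shows "Dx mul vp w f (x, y) =
    (Dxp mul vp F1 (x, \<rho>) - dr F2 (x, \<rho>) - ((real CARD('q) - 1) / \<rho>) *\<^sub>R F2 (x, \<rho>))
    + mul (vecA w (inverse \<rho> *\<^sub>R y)) (Dxp_bar mul vp i0 F2 (x, \<rho>) + dr F1 (x, \<rho>))"
proof -
  define u where "u = inverse \<rho> *\<^sub>R y"
  define W where "W = vecA w u"
  have u: "norm u = 1"
    using assms(1-3) by (simp add: u_def)
  obtain F1' F2' where F1': "(F1 has_derivative F1') (at (x, \<rho>))" and F2': "(F2 has_derivative F2') (at (x, \<rho>))"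
    using F1_differentiable F2_differentiable assms(4) by (meson differentiable_def)
  define G' where "G' h = F1' (fst h, snd h \<bullet> u) + mul W (F2' (fst h, snd h \<bullet> u))
    + inverse \<rho> *\<^sub>R (mul (vecA w (snd h)) (F2 (x, \<rho>)) - (snd h \<bullet> u) *\<^sub>R mul W (F2 (x, \<rho>)))" for h
  have "(f has_derivative G') (at (x, y))"
    using has_derivative_f_off_axis[OF assms F1' F2'] unfolding G'_def W_def u_def .
  then have pderiv_f: "pderiv_dir f (x, y) h = G' h" for h
    by (rule pderiv_dir_eq)
  have lin1: "linear F1'" and lin2: "linear F2'"
    using F1' F2' by (simp_all add: has_derivative_linear)
  have G'_p: "G' (axis i 1, 0) = pderiv_dir F1 (x, \<rho>) (axis i 1, 0) + mul W (pderiv_dir F2 (x, \<rho>) (axis i 1, 0))" for i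
    using pderiv_dir_eq[OF F1'] pderiv_dir_eq[OF F2'] by (simp add: G'_def linear_0[OF linear_vecA] zero_left)
  have G'_q: "G' (0, axis j 1) = u $ j *\<^sub>R (dr F1 (x, \<rho>) + mul W (dr F2 (x, \<rho>)))
      + inverse \<rho> *\<^sub>R (mul (w j) (F2 (x, \<rho>)) - u $ j *\<^sub>R mul W (F2 (x, \<rho>)))" for j
  proof -
    have "F (0, u $ j) = u $ j *\<^sub>R F (0, 1)" if "linear F" for F :: "(real^'p) \<times> real \<Rightarrow> 'a"
      using linear_scale[OF that, of "u $ j" "(0, 1)"] by simp
    from this[OF lin1] this[OF lin2] show ?thesis
      using pderiv_dir_eq[OF F1'] pderiv_dir_eq[OF F2']
      by (simp add: G'_def dr_def vecA_axis inner_axis' scaleR_right scaleR_add_right)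
  qed
  have "Dx mul vp w f (x, y) = (\<Sum>i\<in>UNIV. mul (vp i) (G' (axis i 1, 0))) + (\<Sum>j\<in>UNIV. mul (w j) (G' (0, axis j 1)))"
    by (simp add: Dx_def pderiv_f)
  also have "\<dots> = Dxp mul vp F1 (x, \<rho>) + mul W (Dxp_bar mul vp i0 F2 (x, \<rho>))
      + (mul W (dr F1 (x, \<rho>) + mul W (dr F2 (x, \<rho>))) + (inverse \<rho> * (1 - real CARD('q))) *\<^sub>R F2 (x, \<rho>))"
    unfolding G'_p G'_q W_def
    using sum_left_mul_anticommuting[of vp i0, OF vp_i0 vp_anticommute_vecA]
      sum_units_mul_radial[OF u]
    by (simp add: Dxp_def Dxp_bar_def)
  also have "\<dots> = (Dxp mul vp F1 (x, \<rho>) - dr F2 (x, \<rho>) - ((real CARD('q) - 1) / \<rho>) *\<^sub>R F2 (x, \<rho>))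
      + mul W (Dxp_bar mul vp i0 F2 (x, \<rho>) + dr F1 (x, \<rho>))"
    using vecA_left_mul_twice[OF u] by (simp add: W_def add_right divide_inverse algebra_simps)
  finally show ?thesis
    unfolding W_def u_def .
qed

lemma Dx_eq_0_off_axis_iff:
  "(\<forall>z\<in>OmegaD D. snd z \<noteq> 0 \<longrightarrow> Dx mul vp w f z = 0) \<longleftrightarrow>
   (\<forall>xp r. (xp, r) \<in> D \<and> r \<noteq> 0 \<longrightarrow>
      Dxp mul vp F1 (xp, r) - dr F2 (xp, r) = ((real CARD('q) - 1) / r) *\<^sub>R F2 (xp, r) \<and>
      Dxp_bar mul vp i0 F2 (xp, r) + dr F1 (xp, r) = 0)"
proof safe
  fix xp r
  assume monogenic: "\<forall>z\<in>OmegaD D. snd z \<noteq> 0 \<longrightarrow> Dx mul vp w f z = 0"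
    and "(xp, r) \<in> D" "r \<noteq> 0"
  define a :: "real^'q" where "a = axis undefined 1"
  have a: "norm a = 1"
    by (simp add: a_def)
  let ?A = "Dxp mul vp F1 (xp, r) - dr F2 (xp, r) - ((real CARD('q) - 1) / r) *\<^sub>R F2 (xp, r)"
  let ?B = "Dxp_bar mul vp i0 F2 (xp, r) + dr F1 (xp, r)"
  \<comment> \<open>D_x f is A + a B at (xp, r a) and A - a B at (xp, - r a), where vecA w a squares to -1.\<close>
  have "?A + mul (vecA w (s *\<^sub>R a)) ?B = 0" if "\<bar>s\<bar> = 1" for s
  proof -
    have norm: "norm (s *\<^sub>R r *\<^sub>R a) = \<bar>r\<bar>"
      using a that by (simp add: abs_mult)
    then have "(xp, s *\<^sub>R r *\<^sub>R a) \<in> OmegaD D" and nz: "s *\<^sub>R r *\<^sub>R a \<noteq> 0"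
      using abs_radius_in_D[OF \<open>(xp, r) \<in> D\<close>] \<open>r \<noteq> 0\<close>
      by (auto simp only: OmegaD_eq mem_Collect_eq fst_conv snd_conv norm_zero abs_0_eq)
    then have "Dx mul vp w f (xp, s *\<^sub>R r *\<^sub>R a) = 0"
      using monogenic by simp
    moreover have "Dx mul vp w f (xp, s *\<^sub>R r *\<^sub>R a) = ?A + mul (vecA w (s *\<^sub>R a)) ?B"
      using Dx_off_axis[OF nz \<open>r \<noteq> 0\<close> norm[symmetric] \<open>(xp, r) \<in> D\<close>] \<open>r \<noteq> 0\<close>
      by (simp add: field_simps)
    ultimately show ?thesis
      by simp
  qed
  from this[of 1] this[of "-1"] have "?A + mul (vecA w a) ?B = 0" and "?A - mul (vecA w a) ?B = 0"
    by (simp_all add: linear_neg[OF linear_vecA] minus_left)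
  from zero_if_add_and_diff_vecA[OF a this]
  show "Dxp mul vp F1 (xp, r) - dr F2 (xp, r) = ((real CARD('q) - 1) / r) *\<^sub>R F2 (xp, r)"
    and "Dxp_bar mul vp i0 F2 (xp, r) + dr F1 (xp, r) = 0"
    by simp_all
next
  fix xp and y :: "real^'q"
  assume eqs: "\<forall>xp r. (xp, r) \<in> D \<and> r \<noteq> 0 \<longrightarrow>
      Dxp mul vp F1 (xp, r) - dr F2 (xp, r) = ((real CARD('q) - 1) / r) *\<^sub>R F2 (xp, r) \<and>
      Dxp_bar mul vp i0 F2 (xp, r) + dr F1 (xp, r) = 0"
    and "(xp, y) \<in> OmegaD D" "snd (xp, y) \<noteq> 0"
  then have "y \<noteq> 0" and "norm y \<noteq> 0" and xD: "(xp, norm y) \<in> D"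
    by (simp_all add: OmegaD_eq)
  from Dx_off_axis[OF this(1,2) _ xD] eqs[rule_format, OF conjI[OF xD this(2)]]
  show "Dx mul vp w f (xp, y) = 0"
    by (simp add: zero_right)
qed

lemma monogenic_iff:
  assumes "C1_on (OmegaD D) f"
  shows "(\<forall>z\<in>OmegaD D. Dx mul vp w f z = 0) \<longleftrightarrow>
   (\<forall>xp r. (xp, r) \<in> D \<and> r \<noteq> 0 \<longrightarrow>
      Dxp mul vp F1 (xp, r) - dr F2 (xp, r) = ((real CARD('q) - 1) / r) *\<^sub>R F2 (xp, r) \<and>
      Dxp_bar mul vp i0 F2 (xp, r) + dr F1 (xp, r) = 0)"
  unfolding Dx_eq_0_off_axis_iff[symmetric]
  using eq_0_on_axis_by_continuity[OF open_OmegaD[OF open_D]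
      continuous_on_Dx[OF bounded_bilinear_axioms open_OmegaD[OF open_D] assms]]
  by blast

end

theorem lemma4p8:
  fixes mul :: "'a::euclidean_space \<Rightarrow> 'a \<Rightarrow> 'a" and e :: 'a and cj :: "'a \<Rightarrow> 'a"
    and vp :: "'p::finite \<Rightarrow> 'a" and i0 :: 'p and w :: "'q::finite \<Rightarrow> 'a"
    and D :: "((real^'p) \<times> real) set"
    and F1 F2 :: "(real^'p) \<times> real \<Rightarrow> 'a"
    and f :: "(real^'p) \<times> (real^'q) \<Rightarrow> 'a"
  assumes alg: "alt_algebra_inv mul e cj"
    and dimA: "DIM('a) > 1"
    and sph_ne: "sphA mul e cj \<noteq> {}"
    and v0: "vp i0 = e"
    and vp_sph: "\<forall>i. i \<noteq> i0 \<longrightarrow> vp i \<in> sphA mul e cj"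
    and w_sph: "\<forall>j. w j \<in> sphA mul e cj"
    and anti_pp: "\<forall>i k. i \<noteq> i0 \<and> k \<noteq> i0 \<and> i \<noteq> k \<longrightarrow> mul (vp i) (vp k) = - mul (vp k) (vp i)"
    and anti_pq: "\<forall>i j. i \<noteq> i0 \<longrightarrow> mul (vp i) (w j) = - mul (w j) (vp i)"
    and anti_qq: "\<forall>j l. j \<noteq> l \<longrightarrow> mul (w j) (w l) = - mul (w l) (w j)"
    and indep: "inj (\<lambda>(a, b). vecA vp a + vecA w b)"
    and M_sub_Q: "range (\<lambda>(a, b). vecA vp a + vecA w b) \<subseteq> QA mul e cj"
    and D_open: "open D" and D_conn: "connected D"
    and D_sym: "\<forall>xp r. (xp, r) \<in> D \<longrightarrow> (xp, - r) \<in> D"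
    and F1_even: "\<forall>xp r. (xp, r) \<in> D \<longrightarrow> F1 (xp, - r) = F1 (xp, r)"
    and F2_odd: "\<forall>xp r. (xp, r) \<in> D \<longrightarrow> F2 (xp, - r) = - F2 (xp, r)"
    and F1_C1: "C1_on D F1" and F2_C1: "C1_on D F2"
    and f_def: "\<forall>xp r \<omega>. (xp, r) \<in> D \<and> r \<ge> 0 \<and> norm \<omega> = 1 \<longrightarrow>
                   f (xp, r *\<^sub>R \<omega>) = F1 (xp, r) + mul (vecA w \<omega>) (F2 (xp, r))"
    and f_C1: "C1_on (OmegaD D) f"
  shows "(\<forall>x\<in>OmegaD D. Dx mul vp w f x = 0) \<longleftrightarrow>
         (\<forall>xp r. (xp, r) \<in> D \<and> r \<noteq> 0 \<longrightarrow>
             Dxp mul vp F1 (xp, r) - dr F2 (xp, r) = ((real CARD('q) - 1) / r) *\<^sub>R F2 (xp, r) \<and>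
             Dxp_bar mul vp i0 F2 (xp, r) + dr F1 (xp, r) = 0)"
proof -
  have bil: "bilinear mul" and left_alt: "\<And>a b. assoc3 mul a a b = 0" and unit: "\<And>b. mul e b = b"
    using alg by (simp_all add: alt_algebra_inv_def)
  have "anticommuting_units mul e w"
  proof (intro anticommuting_units.intro anticommuting_units_axioms.intro)
    show "bounded_bilinear mul"
      using bil by (simp add: bilinear_conv_bounded_bilinear)
    show "mul (mul a a) b = mul a (mul a b)" for a b
      using left_alt[of a b] by (simp add: assoc3_def)
    show "mul (w j) (w j) = - e" for j
      using sphA_square[OF bil] w_sph by blast
    show "j \<noteq> l \<Longrightarrow> mul (w j) (w l) = - mul (w l) (w j)" for j l
      using anti_qq by blast
  qed (rule unit)
  then have "partial_slice mul e w vp i0 D F1 F2 f"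
  proof (rule partial_slice.intro, intro partial_slice_axioms.intro)
    show "F1 differentiable (at y)" "F2 differentiable (at y)" if "y \<in> D" for y
      using F1_C1 F2_C1 that unfolding C1_on_def differentiable_def by blast+
  qed (simp_all add: v0 anti_pq D_open D_sym F1_even F2_odd f_def)
  from partial_slice.monogenic_iff[OF this f_C1] show ?thesis .
qed

end
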